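(* Let $W_2\in\{M_2,S_2\}$ and let $\phi:W_2\to W_2$ be a linear map with $\sigma_{\mathcal{K}}(\phi(A))=\sigma_{\mathcal{K}}(A)$ for all $A\in W_2$. Then $\phi(E_{12}+E_{21})=E_{12}+E_{21}$ or $\phi(E_{12}+E_{21})=-(E_{12}+E_{21})$.
   Context: $M_2$: real $2\times2$ matrices; $S_2$: symmetric ones; $E_{ij}$ is the matrix with $1$ in position $(i,j)$ and $0$ elsewhere. Lorentz cone $\mathcal{K}=\{(x_1,x_2)^T:|x_1|\le x_2\}$; a real $\lambda$ is an L-eigenvalue of $A$ if there is a nonzero $x\in\mathcal{K}$ with $(A-\lambda I)x\in\mathcal{K}$ and $x^T(A-\lambda I)x=0$; $\sigma_{\mathcal{K}}(A)$ is the set of L-eigenvalues. *)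

theory Defs
  imports "HOL-Analysis.Analysis"
begin

type_synonym mat2 = "real ^ 2 ^ 2"

definition Emat :: "2 \<Rightarrow> 2 \<Rightarrow> mat2" where
  "Emat i j = (\<chi> k l. if k = i \<and> l = j then 1 else 0)"

definition lorentz_cone :: "(real ^ 2) set" where
  "lorentz_cone = {x. \<bar>x $ 1\<bar> \<le> x $ 2}"

definition is_L_eigenvalue :: "mat2 \<Rightarrow> real \<Rightarrow> bool" where
  "is_L_eigenvalue A lam \<longleftrightarrow>
     (\<exists>x. x \<noteq> 0 \<and> x \<in> lorentz_cone \<and>
          (A - lam *\<^sub>R mat 1) *v x \<in> lorentz_cone \<and>
          x \<bullet> ((A - lam *\<^sub>R mat 1) *v x) = 0)"

definition L_spectrum :: "mat2 \<Rightarrow> real set" where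
  "L_spectrum A = {lam. is_L_eigenvalue A lam}"

definition sym_mats :: "mat2 set" where
  "sym_mats = {A. transpose A = A}"

end

theory Submission
  imports Defs
begin

(* The coordinates (x1 + x2, x2 - x1) map the Lorentz cone onto the nonnegative quadrant and
   double inner products, so the L-eigenvalues of A are the Pareto eigenvalues of the conjugate
   matrix B = [[p, q], [r, s]]: p if r >= 0, s if q >= 0, and eigenvalues with a positive
   eigenvector. For C = E12 + E21 the conjugate is diag(1, -1), so the conjugate B of phi C
   satisfies sigma(B) = sigma(-B) = {-1, 1}. This forces B to be diag(1, -1) with r >= 0 >= q,
   or the negative of such a matrix. The off-diagonal entries vanish: in the symmetric case
   because B is symmetric, in general by perturbation. Matrices +-C + tY with L-spectrum {-1}
   exist for t > 0; a nonzero off-diagonal entry of B would keep the nearby diagonal entry of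
   the conjugate of phi (+-C + tY) a Pareto eigenvalue different from -1 for small t. *)

definition pareto_spectrum :: "real^'n^'n \<Rightarrow> real set" where
  "pareto_spectrum B = {lam. \<exists>u. u \<noteq> 0 \<and> 0 \<le> u \<and> 0 \<le> (B - lam *\<^sub>R mat 1) *v u \<and>
                                  u \<bullet> ((B - lam *\<^sub>R mat 1) *v u) = 0}"

lemma diagonal_mem_pareto_spectrum:
  fixes B :: "real^'n^'n"
  assumes "\<And>j. j \<noteq> i \<Longrightarrow> 0 \<le> B$j$i"
  shows "B$i$i \<in> pareto_spectrum B"
proof -
  let ?e = "axis i (1::real)" and ?w = "(B - B$i$i *\<^sub>R mat 1) *v axis i 1"
  have w: "?w $ j = (if j = i then 0 else B$j$i)" for j
    by (simp add: matrix_vector_mult_basis column_def mat_def)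
  have "?e \<noteq> 0" "0 \<le> ?e"
    by (simp_all add: axis_eq_0_iff)
  moreover have "0 \<le> ?w" "?e \<bullet> ?w = 0"
    by (simp_all add: less_eq_vec_def w assms inner_axis')
  ultimately show ?thesis
    unfolding pareto_spectrum_def by blast
qed

lemma pareto_spectrum_limit_diagonal:
  fixes B :: "'a \<Rightarrow> real^'n^'n"
  assumes lim: "(B \<longlongrightarrow> B0) F" and "F \<noteq> bot" and "closed S"
    and spec: "\<forall>\<^sub>F t in F. pareto_spectrum (B t) \<subseteq> S"
    and pos: "\<And>j. j \<noteq> i \<Longrightarrow> 0 < B0$j$i"
  shows "B0$i$i \<in> S"
proof (rule Lim_in_closed_set[OF \<open>closed S\<close> _ \<open>F \<noteq> bot\<close>])
  have entry: "((\<lambda>t. B t $k$l) \<longlongrightarrow> B0$k$l) F" for k l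
    using lim by (intro tendsto_vec_nth)
  have "\<forall>\<^sub>F t in F. \<forall>j. j \<noteq> i \<longrightarrow> 0 < B t $j$i"
  proof (rule eventually_all_finite)
    show "\<forall>\<^sub>F t in F. j \<noteq> i \<longrightarrow> 0 < B t $j$i" for j
      by (cases "j = i") (auto intro: order_tendstoD(1)[OF entry pos])
  qed
  with spec show "\<forall>\<^sub>F t in F. B t $i$i \<in> S"
    by eventually_elim (blast intro: diagonal_mem_pareto_spectrum less_imp_le)
  show "((\<lambda>t. B t $i$i) \<longlongrightarrow> B0$i$i) F"
    by (rule entry)
qed

lemma index_2_cases:
  fixes i j :: 2
  assumes "i \<noteq> j"
  shows "i = 1 \<and> j = 2 \<or> i = 2 \<and> j = 1"
  using assms by (metis exhaust_2)

lemma forall_2_of_neq: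
  fixes i j :: 2
  assumes "i \<noteq> j"
  shows "(\<forall>k. P k) \<longleftrightarrow> P i \<and> P j"
  using index_2_cases[OF assms] by (auto simp: forall_2)

lemma sum_2_of_neq:
  fixes i j :: 2
  assumes "i \<noteq> j"
  shows "sum f UNIV = f i + f j"
  using index_2_cases[OF assms] by (auto simp: sum_2 add.commute)

lemma other_index_2:
  fixes i j k :: 2
  assumes "i \<noteq> j" and "k \<noteq> i"
  shows "k = j"
  using index_2_cases[OF assms(1)] exhaust_2[of k] assms(2) by auto

lemma pareto_spectrum_2_cases:
  fixes B :: mat2
  assumes "lam \<in> pareto_spectrum B" and "i \<noteq> j"
  shows "(lam = B$i$i \<and> 0 \<le> B$j$i) \<or> (lam = B$j$j \<and> 0 \<le> B$i$j) \<or>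
         sgn (B$i$i - lam) = - sgn (B$i$j)"
proof -
  obtain u where u: "u \<noteq> 0" "0 \<le> u" and w: "0 \<le> (B - lam *\<^sub>R mat 1) *v u"
    and compl: "u \<bullet> ((B - lam *\<^sub>R mat 1) *v u) = 0"
    using assms(1) unfolding pareto_spectrum_def by blast
  note sum_ij = sum_2_of_neq[OF assms(2)] and all_ij = forall_2_of_neq[OF assms(2)]
  define wi where "wi = (B$i$i - lam) * u$i + B$i$j * u$j"
  define wj where "wj = B$j$i * u$i + (B$j$j - lam) * u$j"
  have w_comp: "(B - lam *\<^sub>R mat 1) *v u = (\<chi> k. if k = i then wi else wj)"
    using assms(2)
    by (simp add: vec_eq_iff all_ij matrix_vector_mult_def sum_ij mat_def wi_def wj_def
                  algebra_simps)
  have nonneg: "0 \<le> u$i" "0 \<le> u$j" "0 \<le> wi" "0 \<le> wj"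
    using u(2) w assms(2) by (simp_all add: less_eq_vec_def all_ij w_comp)
  have "u$i * wi + u$j * wj = 0"
    using compl assms(2) by (simp add: inner_vec_def sum_ij w_comp)
  then have zero: "u$i * wi = 0" "u$j * wj = 0"
    using nonneg by (simp_all add: add_nonneg_eq_0_iff)
  have "u$i \<noteq> 0 \<or> u$j \<noteq> 0"
    using u(1) by (simp add: vec_eq_iff all_ij)
  then consider "u$j = 0" "0 < u$i" | "u$i = 0" "0 < u$j" | "0 < u$i" "0 < u$j"
    using nonneg by fastforce
  then show ?thesis
  proof cases
    case 1
    then show ?thesis using zero nonneg by (auto simp: wi_def wj_def zero_le_mult_iff)
  next
    case 2
    then show ?thesis using zero nonneg by (auto simp: wi_def wj_def zero_le_mult_iff)
  next
    case 3
    then have "(B$i$i - lam) * u$i = - (B$i$j * u$j)"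
      using zero by (simp add: wi_def)
    then have "sgn (B$i$i - lam) * sgn (u$i) = - (sgn (B$i$j) * sgn (u$j))"
      by (metis sgn_minus sgn_mult)
    then show ?thesis using 3 by simp
  qed
qed

lemma diagonal_mem_pareto_spectrum_2:
  fixes B :: mat2
  assumes "i \<noteq> j" and "0 \<le> B$j$i"
  shows "B$i$i \<in> pareto_spectrum B"
  using assms by (intro diagonal_mem_pareto_spectrum) (metis other_index_2)

lemma pareto_spectrum_diagonal_2:
  fixes B :: mat2
  assumes "B$1$2 = 0" and "B$2$1 = 0"
  shows "pareto_spectrum B = {B$1$1, B$2$2}"
proof
  show "{B$1$1, B$2$2} \<subseteq> pareto_spectrum B"
    using diagonal_mem_pareto_spectrum_2[of 1 2] diagonal_mem_pareto_spectrum_2[of 2 1] assms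
    by simp
  show "pareto_spectrum B \<subseteq> {B$1$1, B$2$2}"
    using pareto_spectrum_2_cases[of _ B 1 2] assms by (auto simp: sgn_0_0)
qed

lemma pareto_spectrum_triangular_2:
  fixes B :: mat2
  assumes "i \<noteq> j" and "B$i$j = 0" and "B$j$i < 0" and "B$j$j < B$i$i"
  shows "pareto_spectrum B \<subseteq> {B$j$j}"
proof
  fix lam assume lam: "lam \<in> pareto_spectrum B"
  have "lam = B$j$j \<or> lam = B$i$i"
    using pareto_spectrum_2_cases[OF lam assms(1)] assms(2,3) by (auto simp: sgn_0_0)
  moreover have "lam \<noteq> B$i$i"
    using pareto_spectrum_2_cases[OF lam assms(1)[symmetric]] assms by (auto simp: sgn_if)
  ultimately show "lam \<in> {B$j$j}" by simp
qed

lemma pm1_spectra_diagonal: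
  fixes B :: mat2
  assumes "pareto_spectrum B = {-1, 1}" and "pareto_spectrum (-B) = {-1, 1}" and "i \<noteq> j"
  shows "B$i$i = 1 \<or> B$i$i = -1"
proof (cases "0 \<le> B$j$i")
  case True
  then show ?thesis
    using diagonal_mem_pareto_spectrum_2[OF assms(3), of B] assms(1) by auto
next
  case False
  then show ?thesis
    using diagonal_mem_pareto_spectrum_2[OF assms(3), of "-B"] assms(2) by auto
qed

lemma pm1_spectra_diagonal_one:
  fixes B :: mat2
  assumes spec: "pareto_spectrum B = {-1, 1}" and spec_neg: "pareto_spectrum (-B) = {-1, 1}"
    and ij: "i \<noteq> j" and one: "B$i$i = 1"
  shows "B$j$j = -1 \<and> 0 \<le> B$j$i \<and> B$i$j \<le> 0"
proof -
  have "B$j$j \<noteq> 1"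
    \<comment> \<open>otherwise -1 needs a positive eigenvector, forcing negative off-diagonal entries,
       and then 1 is not a Pareto eigenvalue at all\<close>
  proof
    assume "B$j$j = 1"
    moreover have "-1 \<in> pareto_spectrum B" and "1 \<in> pareto_spectrum B"
      using spec by auto
    ultimately show False
      using pareto_spectrum_2_cases[of "-1" B i j] pareto_spectrum_2_cases[of "-1" B j i]
        pareto_spectrum_2_cases[of 1 B i j] ij one by (auto simp: sgn_if split: if_splits)
  qed
  then have jj: "B$j$j = -1"
    using pm1_spectra_diagonal[OF spec spec_neg ij[symmetric]] by simp
  have "1 \<in> pareto_spectrum B" and "1 \<in> pareto_spectrum (-B)"
    using spec spec_neg by auto
  then have "0 \<le> B$j$i" and "B$i$j \<le> 0"
    using pareto_spectrum_2_cases[of 1 B j i] pareto_spectrum_2_cases[of 1 "-B" i j] ij one jj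
    by (auto simp: sgn_if split: if_splits)
  with jj show ?thesis by simp
qed

lemma pm1_spectra_cases:
  fixes B :: mat2
  assumes "pareto_spectrum B = {-1, 1}" and "pareto_spectrum (-B) = {-1, 1}"
  shows "(B$1$1 = 1 \<and> B$2$2 = -1 \<and> 0 \<le> B$2$1 \<and> B$1$2 \<le> 0) \<or>
         (B$1$1 = -1 \<and> B$2$2 = 1 \<and> B$2$1 \<le> 0 \<and> 0 \<le> B$1$2)"
  using pm1_spectra_diagonal[OF assms, of 1 2]
    pm1_spectra_diagonal_one[OF assms, of 1 2] pm1_spectra_diagonal_one[of "-B" 1 2] assms
  by force

lemma pm1_spectra_eq_diagonal:
  fixes B :: mat2
  assumes "pareto_spectrum B = {-1, 1}" and "pareto_spectrum (-B) = {-1, 1}"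
    and "B$1$2 = B$2$1 \<or>
         (\<forall>i j. i \<noteq> j \<longrightarrow> (0 < B$j$i \<longrightarrow> B$i$i = -1) \<and> (B$j$i < 0 \<longrightarrow> B$i$i = 1))"
  shows "B = Emat 1 1 - Emat 2 2 \<or> B = - (Emat 1 1 - Emat 2 2)"
proof -
  have "(1::2) \<noteq> 2"
    by simp
  then have "B$1$2 = 0 \<and> B$2$1 = 0"
    using pm1_spectra_cases[OF assms(1,2)] assms(3) by (smt (verit))
  with pm1_spectra_cases[OF assms(1,2)] show ?thesis
    by (auto simp: vec_eq_iff forall_2 Emat_def)
qed

definition lorentz_to_orthant :: mat2 where
  "lorentz_to_orthant = vector [vector [1, 1], vector [-1, 1]]"

definition orthant_to_lorentz :: mat2 where
  "orthant_to_lorentz = vector [vector [1/2, -1/2], vector [1/2, 1/2]]"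

lemma lorentz_to_orthant_inverse:
  "lorentz_to_orthant ** orthant_to_lorentz = mat 1"
  "orthant_to_lorentz ** lorentz_to_orthant = mat 1"
  by (simp_all add: vec_eq_iff forall_2 matrix_matrix_mult_def sum_2 mat_def
                    lorentz_to_orthant_def orthant_to_lorentz_def)

lemma lorentz_to_orthant_apply:
  "lorentz_to_orthant *v x = vector [x$1 + x$2, x$2 - x$1]"
  by (simp add: vec_eq_iff forall_2 matrix_vector_mult_def sum_2 lorentz_to_orthant_def)

lemma mem_lorentz_cone_iff: "x \<in> lorentz_cone \<longleftrightarrow> 0 \<le> lorentz_to_orthant *v x"
  by (auto simp: lorentz_cone_def lorentz_to_orthant_apply less_eq_vec_def forall_2)

lemma inner_lorentz_to_orthant:
  "(lorentz_to_orthant *v x) \<bullet> (lorentz_to_orthant *v y) = 2 * (x \<bullet> y)"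
  by (simp add: lorentz_to_orthant_apply inner_vec_def sum_2 algebra_simps)

lemma lorentz_to_orthant_eq_0_iff: "lorentz_to_orthant *v x = 0 \<longleftrightarrow> x = 0"
  by (metis lorentz_to_orthant_inverse(2) matrix_vector_mul_assoc matrix_vector_mul_lid
      matrix_vector_mult_0_right)

definition orthant_form :: "mat2 \<Rightarrow> mat2" where
  "orthant_form A = lorentz_to_orthant ** A ** orthant_to_lorentz"

lemma orthant_form_shift_apply:
  "(orthant_form A - lam *\<^sub>R mat 1) *v (lorentz_to_orthant *v x) =
   lorentz_to_orthant *v ((A - lam *\<^sub>R mat 1) *v x)"
proof -
  have "orthant_form A *v (lorentz_to_orthant *v x) = lorentz_to_orthant *v (A *v x)"
    by (simp add: orthant_form_def matrix_vector_mul_assoc)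
       (simp add: lorentz_to_orthant_inverse flip: matrix_mul_assoc)
  then show ?thesis
    by (simp add: matrix_vector_mult_diff_rdistrib matrix_vector_mult_diff_distrib
                  matrix_vector_mult_scaleR flip: scaleR_matrix_vector_assoc)
qed

lemma L_spectrum_eq_pareto_spectrum: "L_spectrum A = pareto_spectrum (orthant_form A)"
proof -
  have ex_orthant: "(\<exists>u. P u) \<longleftrightarrow> (\<exists>x. P (lorentz_to_orthant *v x))" for P
    by (metis lorentz_to_orthant_inverse(1) matrix_vector_mul_assoc matrix_vector_mul_lid)
  have "lam \<in> pareto_spectrum (orthant_form A) \<longleftrightarrow> is_L_eigenvalue A lam" for lam
    unfolding pareto_spectrum_def mem_Collect_eq is_L_eigenvalue_def
    by (subst ex_orthant)
       (simp add: orthant_form_shift_apply mem_lorentz_cone_iff inner_lorentz_to_orthant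
                  lorentz_to_orthant_eq_0_iff)
  then show ?thesis
    unfolding L_spectrum_def by blast
qed

lemma orthant_form_nth:
  "orthant_form A $1$1 = (A$1$1 + A$1$2 + A$2$1 + A$2$2) / 2"
  "orthant_form A $1$2 = (A$1$2 + A$2$2 - A$1$1 - A$2$1) / 2"
  "orthant_form A $2$1 = (A$2$1 + A$2$2 - A$1$1 - A$1$2) / 2"
  "orthant_form A $2$2 = (A$1$1 + A$2$2 - A$1$2 - A$2$1) / 2"
  by (simp_all add: orthant_form_def matrix_matrix_mult_def sum_2
                    lorentz_to_orthant_def orthant_to_lorentz_def field_simps)

lemma linear_orthant_form: "linear orthant_form"
  by (rule linearI) (simp_all add: vec_eq_iff forall_2 orthant_form_nth field_simps)

lemma orthant_form_cancel: "orthant_to_lorentz ** orthant_form A ** lorentz_to_orthant = A"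
  by (simp add: orthant_form_def matrix_mul_assoc lorentz_to_orthant_inverse)
     (simp add: lorentz_to_orthant_inverse flip: matrix_mul_assoc)

lemma orthant_form_of_conj: "orthant_form (orthant_to_lorentz ** B ** lorentz_to_orthant) = B"
  by (simp add: orthant_form_def matrix_mul_assoc lorentz_to_orthant_inverse)
     (simp add: lorentz_to_orthant_inverse flip: matrix_mul_assoc)

lemma orthant_form_eq_iff: "orthant_form A = orthant_form A' \<longleftrightarrow> A = A'"
  by (metis orthant_form_cancel)

lemma orthant_form_symmetric:
  assumes "transpose A = A"
  shows "orthant_form A $1$2 = orthant_form A $2$1"
proof -
  from arg_cong[where f = "\<lambda>M. M$1$2", OF assms] have "A$1$2 = A$2$1"
    by (simp add: transpose_def)
  then show ?thesis
    by (simp add: orthant_form_nth)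
qed

lemma orthant_form_swap: "orthant_form (Emat 1 2 + Emat 2 1) = Emat 1 1 - Emat 2 2"
  by (simp add: vec_eq_iff forall_2 orthant_form_nth Emat_def)

lemma L_spectrum_swap:
  "L_spectrum (Emat 1 2 + Emat 2 1) = {-1, 1}"
  "L_spectrum (- (Emat 1 2 + Emat 2 1)) = {-1, 1}"
proof -
  have "pareto_spectrum (Emat 1 1 - Emat 2 2) = {-1, 1}"
    "pareto_spectrum (- (Emat 1 1 - Emat 2 2)) = {-1, 1}"
    by (subst pareto_spectrum_diagonal_2; force simp: Emat_def)+
  then show "L_spectrum (Emat 1 2 + Emat 2 1) = {-1, 1}"
    "L_spectrum (- (Emat 1 2 + Emat 2 1)) = {-1, 1}"
    by (simp_all only: L_spectrum_eq_pareto_spectrum orthant_form_swap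
                       linear_neg[OF linear_orthant_form])
qed

lemma L_spectrum_preserver_perturbation:
  fixes \<phi> :: "mat2 \<Rightarrow> mat2"
  assumes "linear \<phi>" and spec: "\<And>A. L_spectrum (\<phi> A) = L_spectrum A"
    and perturbed: "\<And>t. 0 < t \<Longrightarrow> L_spectrum (A + t *\<^sub>R Y) \<subseteq> {-1}"
    and "i \<noteq> j" and "0 < orthant_form (\<phi> A) $j$i"
  shows "orthant_form (\<phi> A) $i$i = -1"
proof -
  define B where "B t = orthant_form (\<phi> A) + t *\<^sub>R orthant_form (\<phi> Y)" for t :: real
  have B_eq: "B t = orthant_form (\<phi> (A + t *\<^sub>R Y))" for t
    using linear_orthant_form \<open>linear \<phi>\<close> by (simp add: B_def linear_add linear_scale)
  have "(B \<longlongrightarrow> orthant_form (\<phi> A) + 0 *\<^sub>R orthant_form (\<phi> Y)) (at_right 0)"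
    unfolding B_def by (intro tendsto_intros)
  then have lim: "(B \<longlongrightarrow> orthant_form (\<phi> A)) (at_right 0)"
    by simp
  have eventually_spec: "\<forall>\<^sub>F t in at_right 0. pareto_spectrum (B t) \<subseteq> {-1}"
    using eventually_at_right_less[of 0]
    by eventually_elim (simp add: B_eq perturbed spec flip: L_spectrum_eq_pareto_spectrum)
  have "orthant_form (\<phi> A) $i$i \<in> {-1}"
  proof (rule pareto_spectrum_limit_diagonal[OF lim _ closed_singleton eventually_spec])
    show "at_right (0::real) \<noteq> bot"
      by simp
    show "0 < orthant_form (\<phi> A) $k$i" if "k \<noteq> i" for k
      using other_index_2[OF \<open>i \<noteq> j\<close> that] assms(5) by simp
  qed
  then show ?thesis
    by simp
qed

lemma L_spectrum_preserver_swap_image: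
  fixes \<phi> :: "mat2 \<Rightarrow> mat2"
  assumes "linear \<phi>" and spec: "\<And>A. L_spectrum (\<phi> A) = L_spectrum A" and "i \<noteq> j"
  defines "B \<equiv> orthant_form (\<phi> (Emat 1 2 + Emat 2 1))"
  shows "(0 < B$j$i \<longrightarrow> B$i$i = -1) \<and> (B$j$i < 0 \<longrightarrow> B$i$i = 1)"
proof (intro conjI impI)
  let ?C = "Emat 1 2 + Emat 2 1"
  let ?conj = "\<lambda>Z. orthant_to_lorentz ** Z ** lorentz_to_orthant"
  have form_perturbed: "orthant_form (X + t *\<^sub>R Z) = orthant_form X + t *\<^sub>R orthant_form Z"
    for X Z t
    by (simp add: linear_add[OF linear_orthant_form] linear_scale[OF linear_orthant_form])
  have "L_spectrum (?C + t *\<^sub>R ?conj (- Emat 2 1)) \<subseteq> {-1}" if "0 < t" for t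
  proof -
    have "orthant_form (?C + t *\<^sub>R ?conj (- Emat 2 1)) = Emat 1 1 - Emat 2 2 - t *\<^sub>R Emat 2 1"
      unfolding form_perturbed orthant_form_swap orthant_form_of_conj by simp
    then show ?thesis
      unfolding L_spectrum_eq_pareto_spectrum
      using pareto_spectrum_triangular_2[of 1 2 "Emat 1 1 - Emat 2 2 - t *\<^sub>R Emat 2 1"] that
      by (simp add: Emat_def)
  qed
  then show "0 < B$j$i \<Longrightarrow> B$i$i = -1"
    unfolding B_def by (rule L_spectrum_preserver_perturbation[OF assms(1) spec _ \<open>i \<noteq> j\<close>])
  have "L_spectrum (- ?C + t *\<^sub>R ?conj (- Emat 1 2)) \<subseteq> {-1}" if "0 < t" for t
  proof -
    have "orthant_form (- ?C + t *\<^sub>R ?conj (- Emat 1 2)) = Emat 2 2 - Emat 1 1 - t *\<^sub>R Emat 1 2"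
      unfolding form_perturbed linear_neg[OF linear_orthant_form] orthant_form_swap
        orthant_form_of_conj by simp
    then show ?thesis
      unfolding L_spectrum_eq_pareto_spectrum
      using pareto_spectrum_triangular_2[of 2 1 "Emat 2 2 - Emat 1 1 - t *\<^sub>R Emat 1 2"] that
      by (simp add: Emat_def)
  qed
  note neg_perturbation = L_spectrum_preserver_perturbation[OF assms(1) spec this \<open>i \<noteq> j\<close>]
  have "orthant_form (\<phi> (- ?C)) = - B"
    unfolding B_def linear_neg[OF assms(1)] linear_neg[OF linear_orthant_form] ..
  with neg_perturbation show "B$j$i < 0 \<Longrightarrow> B$i$i = 1"
    by simp
qed

theorem lemma4p8:
  fixes W :: "mat2 set" and \<phi> :: "mat2 \<Rightarrow> mat2"
  assumes W: "W = UNIV \<or> W = sym_mats"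
    and maps: "\<And>A. A \<in> W \<Longrightarrow> \<phi> A \<in> W"
    and add: "\<And>A B. A \<in> W \<Longrightarrow> B \<in> W \<Longrightarrow> \<phi> (A + B) = \<phi> A + \<phi> B"
    and scale: "\<And>c A. A \<in> W \<Longrightarrow> \<phi> (c *\<^sub>R A) = c *\<^sub>R \<phi> A"
    and spec: "\<And>A. A \<in> W \<Longrightarrow> L_spectrum (\<phi> A) = L_spectrum A"
  shows "\<phi> (Emat 1 2 + Emat 2 1) = Emat 1 2 + Emat 2 1 \<or>
         \<phi> (Emat 1 2 + Emat 2 1) = - (Emat 1 2 + Emat 2 1)"
proof -
  let ?C = "Emat 1 2 + Emat 2 1"
  define B where "B = orthant_form (\<phi> ?C)"
  have C_W: "?C \<in> W" "- ?C \<in> W"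
    using W by (auto simp: sym_mats_def vec_eq_iff forall_2 transpose_def Emat_def)
  have "L_spectrum (\<phi> ?C) = {-1, 1}" "L_spectrum (\<phi> (- ?C)) = {-1, 1}"
    using spec[OF C_W(1)] spec[OF C_W(2)] L_spectrum_swap by simp_all
  moreover have "\<phi> (- ?C) = - \<phi> ?C"
    using scale[OF C_W(1), of "-1"] by simp
  ultimately have "pareto_spectrum B = {-1, 1}" "pareto_spectrum (- B) = {-1, 1}"
    by (simp_all add: B_def L_spectrum_eq_pareto_spectrum linear_neg[OF linear_orthant_form])
  moreover have "B$1$2 = B$2$1 \<or>
      (\<forall>i j. i \<noteq> j \<longrightarrow> (0 < B$j$i \<longrightarrow> B$i$i = -1) \<and> (B$j$i < 0 \<longrightarrow> B$i$i = 1))"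
    using W
  proof
    assume "W = UNIV"
    then have "linear \<phi>" and "\<And>A. L_spectrum (\<phi> A) = L_spectrum A"
      using add scale spec by (simp_all add: linearI)
    from L_spectrum_preserver_swap_image[OF this] show ?thesis
      unfolding B_def by blast
  next
    assume "W = sym_mats"
    then show ?thesis
      using maps[OF C_W(1)] by (simp add: B_def sym_mats_def orthant_form_symmetric)
  qed
  ultimately have "B = Emat 1 1 - Emat 2 2 \<or> B = - (Emat 1 1 - Emat 2 2)"
    by (rule pm1_spectra_eq_diagonal)
  then show ?thesis
    unfolding B_def orthant_form_swap[symmetric] linear_neg[OF linear_orthant_form, symmetric]
      orthant_form_eq_iff .
qed

end
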